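(* Let $p\ge 1$ and let $u,v,w\in E^p$. Then for every $\alpha\in[0,1]$, $$D(\alpha u+(1-\alpha)v,\,w)\le \sqrt{D(u,w)^2+D(v,w)^2}.$$
   Context: A fuzzy subset of $\mathbb{R}^p$ is a function $u:\mathbb{R}^p\to[0,1]$. Its $\alpha$-cut is $[u]_\alpha=\{x\in\mathbb{R}^p: u(x)\ge\alpha\}$ for $\alpha\in(0,1]$, and $[u]_0=\overline{\{x\in\mathbb{R}^p: u(x)>0\}}$. The set $E^p$ of $p$-dimensional fuzzy numbers consists of all fuzzy subsets $u$ of $\mathbb{R}^p$ such that $[u]_\alpha$ is a nonempty compact convex subset of $\mathbb{R}^p$ for every $\alpha\in[0,1]$. For $u,v\in E^p$ and $r\in\mathbb{R}$, $u+v$ and $r\cdot u$ are the elements of $E^p$ determined by $[u+v]_\alpha=\{x+y: x\in[u]_\alpha,\ y\in[v]_\alpha\}$ and $[r\cdot u]_\alpha=\{rx: x\in[u]_\alpha\}$ for all $\alpha\in[0,1]$. The sendograph of $u\in E^p$ is $\mathrm{send}\,u=\{(x,\alpha)\in[u]_0\times[0,1]: u(x)\ge\alpha\}\subset\mathbb{R}^{p+1}$, a nonempty compact set. For nonempty compact $U,V\subset\mathbb{R}^{p+1}$ (with the Euclidean metric $d$), the Hausdorff metric is $H(U,V)=\max\{H^*(U,V),H^*(V,U)\}$ with $H^*(U,V)=\sup_{a\in U}\inf_{b\in V}d(a,b)$. The sendograph metric on $E^p$ is $D(u,v)=H(\mathrm{send}\,u,\mathrm{send}\,v)$. *)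

theory Defs
  imports "HOL-Analysis.Analysis"
begin

text \<open>R^p is modelled by an arbitrary Euclidean space 'a (dimension DIM('a) \<ge> 1).
  A fuzzy subset is a function u :: 'a \<Rightarrow> real with values in [0,1].\<close>

definition fuzzy_subset :: "('a::euclidean_space \<Rightarrow> real) \<Rightarrow> bool" where
  "fuzzy_subset u \<longleftrightarrow> (\<forall>x. 0 \<le> u x \<and> u x \<le> 1)"

definition acut :: "('a::euclidean_space \<Rightarrow> real) \<Rightarrow> real \<Rightarrow> 'a set" where
  "acut u \<alpha> = (if \<alpha> = 0 then closure {x. u x > 0} else {x. u x \<ge> \<alpha>})"

definition fuzzy_numbers :: "('a::euclidean_space \<Rightarrow> real) set" where
  "fuzzy_numbers = {u. fuzzy_subset u \<and>
     (\<forall>\<alpha>\<in>{0..1}. acut u \<alpha> \<noteq> {} \<and> compact (acut u \<alpha>) \<and> convex (acut u \<alpha>))}"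

definition fadd :: "('a::euclidean_space \<Rightarrow> real) \<Rightarrow> ('a \<Rightarrow> real) \<Rightarrow> ('a \<Rightarrow> real)" where
  "fadd u v = (THE w. w \<in> fuzzy_numbers \<and>
      (\<forall>\<alpha>\<in>{0..1}. acut w \<alpha> = {x + y | x y. x \<in> acut u \<alpha> \<and> y \<in> acut v \<alpha>}))"

definition fscale :: "real \<Rightarrow> ('a::euclidean_space \<Rightarrow> real) \<Rightarrow> ('a \<Rightarrow> real)" where
  "fscale r u = (THE w. w \<in> fuzzy_numbers \<and>
      (\<forall>\<alpha>\<in>{0..1}. acut w \<alpha> = {r *\<^sub>R x | x. x \<in> acut u \<alpha>}))"

text \<open>Sendograph, a subset of R^p \<times> R (product metric on 'a \<times> real is Euclidean).\<close>

definition send :: "('a::euclidean_space \<Rightarrow> real) \<Rightarrow> ('a \<times> real) set" where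
  "send u = {(x, \<alpha>). x \<in> acut u 0 \<and> \<alpha> \<in> {0..1} \<and> u x \<ge> \<alpha>}"

definition hausdorff_semi :: "('b::metric_space) set \<Rightarrow> 'b set \<Rightarrow> real" where
  "hausdorff_semi U V = (SUP a\<in>U. INF b\<in>V. dist a b)"

definition hausdorff :: "('b::metric_space) set \<Rightarrow> 'b set \<Rightarrow> real" where
  "hausdorff U V = max (hausdorff_semi U V) (hausdorff_semi V U)"

definition send_metric :: "('a::euclidean_space \<Rightarrow> real) \<Rightarrow> ('a \<Rightarrow> real) \<Rightarrow> real" where
  "send_metric u v = hausdorff (send u) (send v)"

end

theory Submission
  imports Defs
begin

text \<open>A fuzzy number is determined by its family of cuts, and the cuts of
  \<open>\<alpha> u + (1 - \<alpha>) v\<close> are the convex combinations \<open>\<alpha> [u]\<^sub>\<beta> + (1 - \<alpha>) [v]\<^sub>\<beta>\<close>.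
  Given \<open>(x, \<beta>) \<in> send u\<close> and \<open>(y, \<beta>) \<in> send v\<close>, pick nearest points
  \<open>(x', \<gamma>\<^sub>1), (y', \<gamma>\<^sub>2) \<in> send w\<close>; by convexity of the cuts of \<open>w\<close>,
  \<open>(\<alpha> x' + (1 - \<alpha>) y', min \<gamma>\<^sub>1 \<gamma>\<^sub>2) \<in> send w\<close>. Its distance to
  \<open>(\<alpha> x + (1 - \<alpha>) y, \<beta>)\<close> has spatial part at most \<open>max |x - x'| |y - y'|\<close> and
  level part at most \<open>max |\<beta> - \<gamma>\<^sub>1| |\<beta> - \<gamma>\<^sub>2|\<close>, so its square is bounded by
  \<open>D(u,w)\<^sup>2 + D(v,w)\<^sup>2\<close>. The reverse semi-distance is symmetric, starting from a
  point of \<open>send w\<close>.\<close>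

lemma acut_pos [simp]: "\<beta> > 0 \<Longrightarrow> acut u \<beta> = {x. u x \<ge> \<beta>}"
  by (simp add: acut_def)

lemma acut_antimono: "0 \<le> \<gamma> \<Longrightarrow> \<gamma> \<le> \<beta> \<Longrightarrow> acut u \<beta> \<subseteq> acut u \<gamma>"
  using closure_subset[of "{x. u x > 0}"] by (auto simp: acut_def)

lemma acut_left_continuous:
  assumes "\<beta> > 0" and "\<And>\<gamma>. 0 < \<gamma> \<Longrightarrow> \<gamma> < \<beta> \<Longrightarrow> x \<in> acut u \<gamma>"
  shows "x \<in> acut u \<beta>"
  using dense_le_bounded[of 0 \<beta> "u x"] assms by auto

lemma fuzzy_number_acut:
  assumes "u \<in> fuzzy_numbers" "0 \<le> \<beta>" "\<beta> \<le> 1"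
  shows "acut u \<beta> \<noteq> {}" "compact (acut u \<beta>)" "convex (acut u \<beta>)"
  using assms by (auto simp: fuzzy_numbers_def)

lemma fuzzy_number_range: "u \<in> fuzzy_numbers \<Longrightarrow> 0 \<le> u x \<and> u x \<le> 1"
  by (auto simp: fuzzy_numbers_def fuzzy_subset_def)

lemma fuzzy_number_eqI:
  assumes "u \<in> fuzzy_numbers" "v \<in> fuzzy_numbers" "\<forall>\<beta>\<in>{0..1}. acut u \<beta> = acut v \<beta>"
  shows "u = v"
proof -
  have le: "a z \<le> b z" if "a \<in> fuzzy_numbers" "b \<in> fuzzy_numbers"
    "\<forall>\<beta>\<in>{0..1}. acut a \<beta> = acut b \<beta>" for a b :: "'a \<Rightarrow> real" and z
  proof (cases "a z > 0")
    case True
    then have "z \<in> acut b (a z)"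
      using that(3) fuzzy_number_range[OF that(1), of z] by (metis acut_pos atLeastAtMost_iff
          less_imp_le mem_Collect_eq order_refl)
    then show ?thesis using True by simp
  qed (use fuzzy_number_range[OF that(2), of z] in auto)
  show ?thesis using le[OF assms] le[OF assms(2,1)] assms(3) by (auto intro: antisym)
qed

text \<open>The representation theorem for fuzzy numbers. The witness assigns to \<open>z\<close> the
  largest level whose set contains \<open>z\<close>.\<close>

lemma fuzzy_number_of_cuts:
  fixes A :: "real \<Rightarrow> 'a::euclidean_space set"
  assumes cut: "\<And>\<beta>. 0 \<le> \<beta> \<Longrightarrow> \<beta> \<le> 1 \<Longrightarrow> A \<beta> \<noteq> {} \<and> compact (A \<beta>) \<and> convex (A \<beta>)"
    and antimono: "\<And>\<gamma> \<beta>. 0 \<le> \<gamma> \<Longrightarrow> \<gamma> \<le> \<beta> \<Longrightarrow> \<beta> \<le> 1 \<Longrightarrow> A \<beta> \<subseteq> A \<gamma>"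
    and left_cont: "\<And>\<beta> z. 0 < \<beta> \<Longrightarrow> \<beta> \<le> 1 \<Longrightarrow>
      (\<And>\<gamma>. 0 < \<gamma> \<Longrightarrow> \<gamma> < \<beta> \<Longrightarrow> z \<in> A \<gamma>) \<Longrightarrow> z \<in> A \<beta>"
    and support: "A 0 \<subseteq> closure (\<Union>\<beta>\<in>{0<..1}. A \<beta>)"
  shows "\<exists>!w. w \<in> fuzzy_numbers \<and> (\<forall>\<beta>\<in>{0..1}. acut w \<beta> = A \<beta>)"
proof -
  define L where "L z = insert 0 {\<beta>\<in>{0<..1}. z \<in> A \<beta>}" for z
  define w where "w z = Sup (L z)" for z
  have bdd: "bdd_above (L z)" for z unfolding L_def by (rule bdd_aboveI[of _ 1]) auto
  have range: "0 \<le> w z \<and> w z \<le> 1" for z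
    unfolding w_def using cSup_upper[OF _ bdd, of 0 z] by (auto simp: L_def intro!: cSup_least)
  have level: "\<beta> \<le> w z \<longleftrightarrow> z \<in> A \<beta>" if "0 < \<beta>" "\<beta> \<le> 1" for z \<beta>
  proof
    assume "\<beta> \<le> w z"
    show "z \<in> A \<beta>"
    proof (rule left_cont[OF that])
      fix \<gamma> assume \<gamma>: "0 < \<gamma>" "\<gamma> < \<beta>"
      then obtain \<gamma>' where "\<gamma>' \<in> L z" "\<gamma> < \<gamma>'"
        using \<open>\<beta> \<le> w z\<close> less_cSup_iff[OF _ bdd, of z \<gamma>] by (auto simp: w_def L_def)
      then show "z \<in> A \<gamma>" using antimono[of \<gamma> \<gamma>'] \<gamma> by (auto simp: L_def)
    qed
  qed (use that cSup_upper[OF _ bdd] in \<open>auto simp: w_def L_def\<close>)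
  have positive: "{z. w z > 0} = (\<Union>\<beta>\<in>{0<..1}. A \<beta>)"
  proof (intro set_eqI iffI)
    fix z assume "z \<in> {z. w z > 0}"
    then show "z \<in> (\<Union>\<beta>\<in>{0<..1}. A \<beta>)"
      using level[of "w z" z] range[of z] by auto
  qed (use level in force)
  have "(\<Union>\<beta>\<in>{0<..1}. A \<beta>) \<subseteq> A 0"
    by (intro UN_least antimono) auto
  moreover have "closed (A 0)" using cut[of 0] compact_imp_closed by auto
  ultimately have "closure (\<Union>\<beta>\<in>{0<..1}. A \<beta>) \<subseteq> A 0" by (rule closure_minimal)
  then have cuts: "\<forall>\<beta>\<in>{0..1}. acut w \<beta> = A \<beta>"
    using support level positive by (auto simp: acut_def)
  then have "w \<in> fuzzy_numbers"
    using range cut by (auto simp: fuzzy_numbers_def fuzzy_subset_def)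
  with cuts fuzzy_number_eqI show ?thesis by metis
qed

text \<open>The sets of decompositions of \<open>z\<close> at the levels below \<open>\<beta>\<close> form a chain of
  nonempty compact sets, so they share a point.\<close>

lemma acut_sum_left_continuous:
  fixes u v :: "'a::euclidean_space \<Rightarrow> real"
  assumes u: "u \<in> fuzzy_numbers" and v: "v \<in> fuzzy_numbers" and \<beta>: "0 < \<beta>" "\<beta> \<le> 1"
    and z: "\<And>\<gamma>. 0 < \<gamma> \<Longrightarrow> \<gamma> < \<beta> \<Longrightarrow> \<exists>x\<in>acut u \<gamma>. z - x \<in> acut v \<gamma>"
  shows "\<exists>x\<in>acut u \<beta>. z - x \<in> acut v \<beta>"
proof -
  define P where "P \<gamma> = acut u \<gamma> \<inter> (\<lambda>y. z - y) ` acut v \<gamma>" for \<gamma>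
  have compact: "compact (P \<gamma>)" if "0 < \<gamma>" "\<gamma> < \<beta>" for \<gamma>
  proof -
    have \<gamma>: "0 \<le> \<gamma>" "\<gamma> \<le> 1" using that \<beta> by auto
    have "compact ((\<lambda>y. z - y) ` acut v \<gamma>)"
      by (intro compact_continuous_image continuous_intros fuzzy_number_acut[OF v \<gamma>])
    then show ?thesis unfolding P_def
      using compact_Int_closed[OF fuzzy_number_acut(2)[OF u \<gamma>] compact_imp_closed] by blast
  qed
  have nonempty: "P \<gamma> \<noteq> {}" if "0 < \<gamma>" "\<gamma> < \<beta>" for \<gamma>
    using z[OF that] by (force simp: P_def)
  have P_antimono: "P \<gamma>' \<subseteq> P \<gamma>" if "0 \<le> \<gamma>" "\<gamma> \<le> \<gamma>'" for \<gamma> \<gamma>'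
    unfolding P_def using acut_antimono[OF that, of u] acut_antimono[OF that, of v] by blast
  have "\<Inter>(P ` {0<..<\<beta>}) \<noteq> {}"
  proof (rule compact_chain)
    show "compact S" if "S \<in> P ` {0<..<\<beta>}" for S using that compact by auto
    show "{} \<notin> P ` {0<..<\<beta>}" using nonempty by (metis greaterThanLessThan_iff imageE)
    show "S \<subseteq> T \<or> T \<subseteq> S" if "S \<in> P ` {0<..<\<beta>} \<and> T \<in> P ` {0<..<\<beta>}" for S T
    proof -
      from that obtain \<gamma> \<gamma>' where "S = P \<gamma>" "T = P \<gamma>'" "0 < \<gamma>" "0 < \<gamma>'" by auto
      then show ?thesis using P_antimono[of \<gamma> \<gamma>'] P_antimono[of \<gamma>' \<gamma>] by (cases "\<gamma> \<le> \<gamma>'") auto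
    qed
  qed
  then obtain x where x: "x \<in> \<Inter>(P ` {0<..<\<beta>})" by (meson equals0I)
  have x_u: "x \<in> acut u \<gamma>" and x_v: "z - x \<in> acut v \<gamma>" if "0 < \<gamma>" "\<gamma> < \<beta>" for \<gamma>
    using x that by (auto simp: P_def)
  have "x \<in> acut u \<beta>" by (rule acut_left_continuous[OF \<beta>(1) x_u])
  moreover have "z - x \<in> acut v \<beta>" by (rule acut_left_continuous[OF \<beta>(1) x_v])
  ultimately show ?thesis by blast
qed

lemma acut_fadd:
  fixes u v :: "'a::euclidean_space \<Rightarrow> real"
  assumes u: "u \<in> fuzzy_numbers" and v: "v \<in> fuzzy_numbers"
  shows "fadd u v \<in> fuzzy_numbers"
    and "\<beta> \<in> {0..1} \<Longrightarrow> acut (fadd u v) \<beta> = {x + y | x y. x \<in> acut u \<beta> \<and> y \<in> acut v \<beta>}"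
proof -
  define A where "A \<beta> = {x + y | x y. x \<in> acut u \<beta> \<and> y \<in> acut v \<beta>}" for \<beta>
  have "\<exists>!w. w \<in> fuzzy_numbers \<and> (\<forall>\<beta>\<in>{0..1}. acut w \<beta> = A \<beta>)"
  proof (rule fuzzy_number_of_cuts)
    fix \<beta> :: real assume "0 \<le> \<beta>" "\<beta> \<le> 1"
    note cu = fuzzy_number_acut[OF u this] and cv = fuzzy_number_acut[OF v this]
    have "A \<beta> = (\<Union>x\<in>acut u \<beta>. \<Union>y\<in>acut v \<beta>. {x + y})" by (auto simp: A_def)
    then show "A \<beta> \<noteq> {} \<and> compact (A \<beta>) \<and> convex (A \<beta>)"
      using cu cv compact_sums'[OF cu(2) cv(2)] convex_sums[OF cu(3) cv(3)] by auto
  next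
    fix \<gamma> \<beta> :: real assume "0 \<le> \<gamma>" "\<gamma> \<le> \<beta>" "\<beta> \<le> 1"
    then show "A \<beta> \<subseteq> A \<gamma>"
      using acut_antimono[of \<gamma> \<beta> u] acut_antimono[of \<gamma> \<beta> v] unfolding A_def by blast
  next
    fix \<beta> :: real and z
    assume \<beta>: "0 < \<beta>" "\<beta> \<le> 1" and z: "\<And>\<gamma>. 0 < \<gamma> \<Longrightarrow> \<gamma> < \<beta> \<Longrightarrow> z \<in> A \<gamma>"
    have "\<exists>x\<in>acut u \<gamma>. z - x \<in> acut v \<gamma>" if \<gamma>: "0 < \<gamma>" "\<gamma> < \<beta>" for \<gamma>
    proof -
      obtain x y where "x \<in> acut u \<gamma>" "y \<in> acut v \<gamma>" "z = x + y"
        using z[OF \<gamma>] by (auto simp: A_def)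
      then show ?thesis by (metis add_diff_cancel_left')
    qed
    then obtain x where "x \<in> acut u \<beta>" "z - x \<in> acut v \<beta>"
      using acut_sum_left_continuous[OF u v \<beta>] by blast
    then show "z \<in> A \<beta>" unfolding A_def by (intro CollectI exI[of _ x] exI[of _ "z - x"]) simp
  next
    have "A 0 = closure {x. u x > 0} + closure {x. v x > 0}"
      by (auto simp: A_def acut_def set_plus_def)
    also have "\<dots> \<subseteq> closure ({x. u x > 0} + {x. v x > 0})" by (rule closure_sum)
    also have "{x. u x > 0} + {x. v x > 0} \<subseteq> (\<Union>\<beta>\<in>{0<..1}. A \<beta>)"
    proof
      fix z assume "z \<in> {x. u x > 0} + {x. v x > 0}"
      then obtain x y where xy: "u x > 0" "v y > 0" "z = x + y" by (auto simp: set_plus_def)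
      then have "z \<in> A (min (u x) (v y))"
        unfolding A_def by (intro CollectI exI[of _ x] exI[of _ y]) simp
      then show "z \<in> (\<Union>\<beta>\<in>{0<..1}. A \<beta>)"
        using xy fuzzy_number_range[OF u, of x] by force
    qed
    then have "closure ({x. u x > 0} + {x. v x > 0}) \<subseteq> closure (\<Union>\<beta>\<in>{0<..1}. A \<beta>)"
      by (rule closure_mono)
    finally show "A 0 \<subseteq> closure (\<Union>\<beta>\<in>{0<..1}. A \<beta>)" .
  qed
  from theI'[OF this] show "fadd u v \<in> fuzzy_numbers"
    and "\<beta> \<in> {0..1} \<Longrightarrow> acut (fadd u v) \<beta> = A \<beta>"
    unfolding fadd_def A_def by auto
qed

lemma acut_fscale:
  fixes u :: "'a::euclidean_space \<Rightarrow> real"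
  assumes u: "u \<in> fuzzy_numbers"
  shows "fscale r u \<in> fuzzy_numbers"
    and "\<beta> \<in> {0..1} \<Longrightarrow> acut (fscale r u) \<beta> = {r *\<^sub>R x | x. x \<in> acut u \<beta>}"
proof -
  define A where "A \<beta> = (\<lambda>x. r *\<^sub>R x) ` acut u \<beta>" for \<beta>
  have "\<exists>!w. w \<in> fuzzy_numbers \<and> (\<forall>\<beta>\<in>{0..1}. acut w \<beta> = A \<beta>)"
  proof (rule fuzzy_number_of_cuts)
    fix \<beta> :: real assume "0 \<le> \<beta>" "\<beta> \<le> 1"
    then show "A \<beta> \<noteq> {} \<and> compact (A \<beta>) \<and> convex (A \<beta>)"
      unfolding A_def using fuzzy_number_acut[OF u] compact_scaling convex_scaling by blast
  next
    fix \<gamma> \<beta> :: real assume "0 \<le> \<gamma>" "\<gamma> \<le> \<beta>" "\<beta> \<le> 1"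
    then show "A \<beta> \<subseteq> A \<gamma>" using acut_antimono[of \<gamma> \<beta> u] unfolding A_def by blast
  next
    fix \<beta> :: real and z
    assume \<beta>: "0 < \<beta>" "\<beta> \<le> 1" and z: "\<And>\<gamma>. 0 < \<gamma> \<Longrightarrow> \<gamma> < \<beta> \<Longrightarrow> z \<in> A \<gamma>"
    show "z \<in> A \<beta>"
    proof (cases "r = 0")
      case True
      then have "z = 0" using z[of "\<beta> / 2"] \<beta> by (auto simp: A_def)
      then show ?thesis using True fuzzy_number_acut(1)[OF u, of \<beta>] \<beta> by (auto simp: A_def)
    next
      case False
      have "z /\<^sub>R r \<in> acut u \<gamma>" if \<gamma>: "0 < \<gamma>" "\<gamma> < \<beta>" for \<gamma>
      proof -
        obtain x where "x \<in> acut u \<gamma>" "z = r *\<^sub>R x" using z[OF \<gamma>] by (auto simp: A_def)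
        then show ?thesis using False by simp
      qed
      then have "z /\<^sub>R r \<in> acut u \<beta>" by (rule acut_left_continuous[OF \<beta>(1)])
      then show ?thesis using False unfolding A_def by (intro image_eqI[of _ _ "z /\<^sub>R r"]) auto
    qed
  next
    have "A 0 = closure ((\<lambda>x. r *\<^sub>R x) ` {x. u x > 0})"
      unfolding A_def using closure_scaleR[of r "{x. u x > 0}"] by (simp add: acut_def)
    also have "(\<lambda>x. r *\<^sub>R x) ` {x. u x > 0} \<subseteq> (\<Union>\<beta>\<in>{0<..1}. A \<beta>)"
    proof
      fix z assume "z \<in> (\<lambda>x. r *\<^sub>R x) ` {x. u x > 0}"
      then obtain x where x: "0 < u x" "z = r *\<^sub>R x" by auto
      then have "z \<in> A (u x)" by (auto simp: A_def)
      then show "z \<in> (\<Union>\<beta>\<in>{0<..1}. A \<beta>)" using x fuzzy_number_range[OF u, of x] by force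
    qed
    then have "closure ((\<lambda>x. r *\<^sub>R x) ` {x. u x > 0}) \<subseteq> closure (\<Union>\<beta>\<in>{0<..1}. A \<beta>)"
      by (rule closure_mono)
    finally show "A 0 \<subseteq> closure (\<Union>\<beta>\<in>{0<..1}. A \<beta>)" .
  qed
  from theI'[OF this] show "fscale r u \<in> fuzzy_numbers"
    and "\<beta> \<in> {0..1} \<Longrightarrow> acut (fscale r u) \<beta> = {r *\<^sub>R x | x. x \<in> acut u \<beta>}"
    unfolding fscale_def A_def Setcompr_eq_image by auto
qed

lemma acut_convex_combination:
  fixes u v :: "'a::euclidean_space \<Rightarrow> real"
  assumes "u \<in> fuzzy_numbers" "v \<in> fuzzy_numbers"
  shows "fadd (fscale t u) (fscale (1 - t) v) \<in> fuzzy_numbers"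
    and "\<beta> \<in> {0..1} \<Longrightarrow> acut (fadd (fscale t u) (fscale (1 - t) v)) \<beta> =
      {t *\<^sub>R x + (1 - t) *\<^sub>R y | x y. x \<in> acut u \<beta> \<and> y \<in> acut v \<beta>}"
  using acut_fadd[OF acut_fscale(1)[OF assms(1)] acut_fscale(1)[OF assms(2)]]
    acut_fscale(2)[OF assms(1)] acut_fscale(2)[OF assms(2)]
  by auto

lemma mem_send_iff:
  assumes "u \<in> fuzzy_numbers"
  shows "(x, \<beta>) \<in> send u \<longleftrightarrow> \<beta> \<in> {0..1} \<and> x \<in> acut u \<beta>"
  using acut_antimono[of 0 \<beta> u] fuzzy_number_range[OF assms, of x]
  by (cases "\<beta> = 0") (auto simp: send_def acut_def)

lemma send_downward_closed:
  assumes "u \<in> fuzzy_numbers" "(x, \<beta>) \<in> send u" "0 \<le> \<gamma>" "\<gamma> \<le> \<beta>"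
  shows "(x, \<gamma>) \<in> send u"
  using assms acut_antimono[of \<gamma> \<beta> u] by (auto simp: mem_send_iff)

text \<open>The sendograph is the hypograph of \<open>u\<close> over \<open>[u]\<^sub>0 \<times> [0,1]\<close>, i.e. the
  intersection of closed sets \<open>{(x, \<beta>). \<beta> \<le> \<gamma> \<or> x \<in> [u]\<^sub>\<gamma>}\<close>.\<close>

lemma send_compact:
  fixes u :: "'a::euclidean_space \<Rightarrow> real"
  assumes u: "u \<in> fuzzy_numbers"
  shows "compact (send u)"
proof -
  let ?R = "(acut u 0 \<times> {0..1}) \<inter> (\<Inter>\<gamma>\<in>{0<..1}. (UNIV \<times> {..\<gamma>}) \<union> (acut u \<gamma> \<times> UNIV))"
  have "send u = ?R"
  proof (intro set_eqI iffI)
    fix p assume p: "p \<in> ?R"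
    obtain x \<beta> where p_eq: "p = (x, \<beta>)" by fastforce
    have above: "\<forall>\<gamma>\<in>{0<..1}. \<beta> \<le> \<gamma> \<or> \<gamma> \<le> u x" and "0 \<le> \<beta>" "\<beta> \<le> 1"
      using p p_eq by auto
    have "\<beta> \<le> u x"
    proof (cases "\<beta> > 0")
      case True
      then show ?thesis using above \<open>\<beta> \<le> 1\<close> by (intro dense_le_bounded[OF True]) force
    qed (use \<open>0 \<le> \<beta>\<close> fuzzy_number_range[OF u, of x] in auto)
    then show "p \<in> send u" using p p_eq by (auto simp: send_def)
  qed (auto simp: send_def)
  moreover have "closed (acut u \<gamma>)" if "0 \<le> \<gamma>" "\<gamma> \<le> 1" for \<gamma>
    using fuzzy_number_acut(2)[OF u that] compact_imp_closed by blast
  then have "closed ?R"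
    by (intro closed_Int closed_INT ballI closed_Un closed_Times) (auto simp del: acut_pos)
  moreover have "bounded ?R"
    using fuzzy_number_acut(2)[OF u, of 0]
    by (intro bounded_Int disjI1 bounded_Times compact_imp_bounded) auto
  ultimately show ?thesis using compact_eq_bounded_closed by metis
qed

lemma send_nonempty:
  assumes "u \<in> fuzzy_numbers"
  shows "send u \<noteq> {}"
proof -
  obtain x where "x \<in> acut u 0" using fuzzy_number_acut(1)[OF assms, of 0] by auto
  then have "(x, 0) \<in> send u" by (simp add: mem_send_iff[OF assms])
  then show ?thesis by auto
qed

lemma hausdorff_semi_le:
  assumes "U \<noteq> {}" "V \<noteq> {}" "\<And>a. a \<in> U \<Longrightarrow> \<exists>b\<in>V. dist a b \<le> R"
  shows "hausdorff_semi U V \<le> R"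
  unfolding hausdorff_semi_def
proof (rule cSUP_least[OF assms(1)])
  fix a assume "a \<in> U"
  then obtain b where "b \<in> V" "dist a b \<le> R" using assms(3) by blast
  then show "(INF b\<in>V. dist a b) \<le> R"
    using infdist_le[of b V a] assms(2) by (simp add: infdist_notempty)
qed

lemma hausdorff_semi_attained:
  fixes U V :: "'b::heine_borel set"
  assumes "compact U" "compact V" "V \<noteq> {}" "a \<in> U"
  shows "\<exists>b\<in>V. dist a b \<le> hausdorff_semi U V"
proof -
  have "bdd_above ((\<lambda>a. infdist a V) ` U)"
    by (intro bounded_imp_bdd_above compact_imp_bounded compact_continuous_image
        continuous_intros assms(1))
  then have "infdist a V \<le> hausdorff_semi U V"
    using cSUP_upper[OF assms(4)] assms(3) by (simp add: hausdorff_semi_def infdist_notempty)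
  moreover obtain b where "b \<in> V" "infdist a V = dist a b"
    using infdist_attains_inf[OF compact_imp_closed[OF assms(2)] assms(3)] by blast
  ultimately show ?thesis by auto
qed

lemma send_metric_near:
  fixes u w :: "'a::euclidean_space \<Rightarrow> real"
  assumes "u \<in> fuzzy_numbers" "w \<in> fuzzy_numbers"
  shows "a \<in> send u \<Longrightarrow> \<exists>b\<in>send w. dist a b \<le> send_metric u w"
    and "a \<in> send w \<Longrightarrow> \<exists>b\<in>send u. dist a b \<le> send_metric u w"
  using hausdorff_semi_attained[of "send u" "send w" a] hausdorff_semi_attained[of "send w" "send u" a]
    send_compact send_nonempty assms
  by (force simp: send_metric_def hausdorff_def)+

lemma dist_convex_combination_min_level:
  fixes x x' y y' :: "'a::real_normed_vector" and t \<beta> \<gamma>\<^sub>1 \<gamma>\<^sub>2 :: real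
  assumes t: "0 \<le> t" "t \<le> 1"
    and d: "dist (x, \<beta>) (x', \<gamma>\<^sub>1) \<le> d\<^sub>1" "dist (y, \<beta>) (y', \<gamma>\<^sub>2) \<le> d\<^sub>2"
  shows "dist (t *\<^sub>R x + (1 - t) *\<^sub>R y, \<beta>) (t *\<^sub>R x' + (1 - t) *\<^sub>R y', min \<gamma>\<^sub>1 \<gamma>\<^sub>2)
    \<le> sqrt (d\<^sub>1\<^sup>2 + d\<^sub>2\<^sup>2)"
proof -
  have "dist (t *\<^sub>R x + (1 - t) *\<^sub>R y) (t *\<^sub>R x' + (1 - t) *\<^sub>R y')
      = norm (t *\<^sub>R (x - x') + (1 - t) *\<^sub>R (y - y'))"
    by (simp add: dist_norm algebra_simps)
  also have "\<dots> \<le> t * dist x x' + (1 - t) * dist y y'"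
    using norm_triangle_ineq[of "t *\<^sub>R (x - x')" "(1 - t) *\<^sub>R (y - y')"] t
    by (simp add: dist_norm)
  also have "\<dots> \<le> max (dist x x') (dist y y')"
    using convex_bound_le[of "dist x x'" "max (dist x x') (dist y y')" "dist y y'" t "1 - t"] t
    by simp
  finally have "(dist (t *\<^sub>R x + (1 - t) *\<^sub>R y) (t *\<^sub>R x' + (1 - t) *\<^sub>R y'))\<^sup>2
      \<le> (dist x x')\<^sup>2 + (dist y y')\<^sup>2"
    by (smt (verit) power_mono zero_le_dist zero_le_power2)
  moreover have "(dist \<beta> (min \<gamma>\<^sub>1 \<gamma>\<^sub>2))\<^sup>2 \<le> (dist \<beta> \<gamma>\<^sub>1)\<^sup>2 + (dist \<beta> \<gamma>\<^sub>2)\<^sup>2"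
    by (simp add: min_def)
  ultimately have "dist (t *\<^sub>R x + (1 - t) *\<^sub>R y, \<beta>) (t *\<^sub>R x' + (1 - t) *\<^sub>R y', min \<gamma>\<^sub>1 \<gamma>\<^sub>2)
      \<le> sqrt ((dist (x, \<beta>) (x', \<gamma>\<^sub>1))\<^sup>2 + (dist (y, \<beta>) (y', \<gamma>\<^sub>2))\<^sup>2)"
    unfolding dist_Pair_Pair by (intro real_sqrt_le_mono) simp
  also have "\<dots> \<le> sqrt (d\<^sub>1\<^sup>2 + d\<^sub>2\<^sup>2)"
    using d by (intro real_sqrt_le_mono add_mono power_mono) auto
  finally show ?thesis .
qed

lemma send_convex_memI:
  assumes w: "w \<in> fuzzy_numbers" and t: "0 \<le> t" "t \<le> 1"
    and "(x, \<gamma>\<^sub>1) \<in> send w" "(y, \<gamma>\<^sub>2) \<in> send w"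
  shows "(t *\<^sub>R x + (1 - t) *\<^sub>R y, min \<gamma>\<^sub>1 \<gamma>\<^sub>2) \<in> send w"
proof -
  have "0 \<le> min \<gamma>\<^sub>1 \<gamma>\<^sub>2" using assms(4,5) by (simp add: mem_send_iff[OF w])
  then have "(x, min \<gamma>\<^sub>1 \<gamma>\<^sub>2) \<in> send w" "(y, min \<gamma>\<^sub>1 \<gamma>\<^sub>2) \<in> send w"
    using send_downward_closed[OF w] assms(4,5) by auto
  then show ?thesis
    using fuzzy_number_acut(3)[OF w] t by (auto simp: mem_send_iff[OF w] intro: convexD)
qed

lemma send_convex_combination_memI:
  assumes u: "u \<in> fuzzy_numbers" and v: "v \<in> fuzzy_numbers"
    and "(x, \<gamma>\<^sub>1) \<in> send u" "(y, \<gamma>\<^sub>2) \<in> send v"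
  shows "(t *\<^sub>R x + (1 - t) *\<^sub>R y, min \<gamma>\<^sub>1 \<gamma>\<^sub>2) \<in> send (fadd (fscale t u) (fscale (1 - t) v))"
proof -
  note s = acut_convex_combination[OF u v, where t = t]
  have "0 \<le> min \<gamma>\<^sub>1 \<gamma>\<^sub>2"
    using assms(3,4) by (simp add: mem_send_iff[OF u] mem_send_iff[OF v])
  then have "(x, min \<gamma>\<^sub>1 \<gamma>\<^sub>2) \<in> send u" "(y, min \<gamma>\<^sub>1 \<gamma>\<^sub>2) \<in> send v"
    using send_downward_closed[OF u] send_downward_closed[OF v] assms(3,4) by auto
  then have "min \<gamma>\<^sub>1 \<gamma>\<^sub>2 \<in> {0..1}" "x \<in> acut u (min \<gamma>\<^sub>1 \<gamma>\<^sub>2)" "y \<in> acut v (min \<gamma>\<^sub>1 \<gamma>\<^sub>2)"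
    by (simp_all add: mem_send_iff[OF u] mem_send_iff[OF v])
  then show ?thesis using s(2) by (simp add: mem_send_iff[OF s(1)]) blast
qed

lemma send_convex_combination_memE:
  assumes u: "u \<in> fuzzy_numbers" and v: "v \<in> fuzzy_numbers"
    and "(z, \<beta>) \<in> send (fadd (fscale t u) (fscale (1 - t) v))"
  obtains x y where "z = t *\<^sub>R x + (1 - t) *\<^sub>R y" "(x, \<beta>) \<in> send u" "(y, \<beta>) \<in> send v"
proof -
  note s = acut_convex_combination[OF u v, where t = t]
  have \<beta>: "\<beta> \<in> {0..1}" and "z \<in> acut (fadd (fscale t u) (fscale (1 - t) v)) \<beta>"
    using assms(3) by (auto simp: mem_send_iff[OF s(1)])
  then obtain x y where "z = t *\<^sub>R x + (1 - t) *\<^sub>R y" "x \<in> acut u \<beta>" "y \<in> acut v \<beta>"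
    using s(2) by auto
  with \<beta> that show ?thesis by (simp add: mem_send_iff[OF u] mem_send_iff[OF v])
qed

lemma hausdorff_semi_send_convex_combination_left:
  fixes u v w :: "'a::euclidean_space \<Rightarrow> real"
  assumes u: "u \<in> fuzzy_numbers" and v: "v \<in> fuzzy_numbers" and w: "w \<in> fuzzy_numbers"
    and t: "0 \<le> t" "t \<le> 1"
  shows "hausdorff_semi (send (fadd (fscale t u) (fscale (1 - t) v))) (send w)
    \<le> sqrt ((send_metric u w)\<^sup>2 + (send_metric v w)\<^sup>2)"
proof (rule hausdorff_semi_le)
  fix a assume a_mem: "a \<in> send (fadd (fscale t u) (fscale (1 - t) v))"
  obtain z \<beta> where a: "a = (z, \<beta>)" by fastforce
  obtain x y where z: "z = t *\<^sub>R x + (1 - t) *\<^sub>R y" and xy: "(x, \<beta>) \<in> send u" "(y, \<beta>) \<in> send v"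
    using send_convex_combination_memE[OF u v a_mem[unfolded a]] .
  obtain x' \<gamma>\<^sub>1 where x': "(x', \<gamma>\<^sub>1) \<in> send w" "dist (x, \<beta>) (x', \<gamma>\<^sub>1) \<le> send_metric u w"
    using send_metric_near(1)[OF u w xy(1)] by auto
  obtain y' \<gamma>\<^sub>2 where y': "(y', \<gamma>\<^sub>2) \<in> send w" "dist (y, \<beta>) (y', \<gamma>\<^sub>2) \<le> send_metric v w"
    using send_metric_near(1)[OF v w xy(2)] by auto
  have "(t *\<^sub>R x' + (1 - t) *\<^sub>R y', min \<gamma>\<^sub>1 \<gamma>\<^sub>2) \<in> send w"
    by (rule send_convex_memI[OF w t x'(1) y'(1)])
  moreover have "dist a (t *\<^sub>R x' + (1 - t) *\<^sub>R y', min \<gamma>\<^sub>1 \<gamma>\<^sub>2)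
      \<le> sqrt ((send_metric u w)\<^sup>2 + (send_metric v w)\<^sup>2)"
    unfolding a z by (rule dist_convex_combination_min_level[OF t x'(2) y'(2)])
  ultimately show "\<exists>b\<in>send w. dist a b \<le> sqrt ((send_metric u w)\<^sup>2 + (send_metric v w)\<^sup>2)"
    by blast
qed (use send_nonempty acut_convex_combination(1) assms in auto)

text \<open>Here the point \<open>z\<close> of \<open>send w\<close> is viewed as the convex combination \<open>t z + (1 - t) z\<close>.\<close>

lemma hausdorff_semi_send_convex_combination_right:
  fixes u v w :: "'a::euclidean_space \<Rightarrow> real"
  assumes u: "u \<in> fuzzy_numbers" and v: "v \<in> fuzzy_numbers" and w: "w \<in> fuzzy_numbers"
    and t: "0 \<le> t" "t \<le> 1"
  shows "hausdorff_semi (send w) (send (fadd (fscale t u) (fscale (1 - t) v)))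
    \<le> sqrt ((send_metric u w)\<^sup>2 + (send_metric v w)\<^sup>2)"
proof (rule hausdorff_semi_le)
  fix a assume "a \<in> send w"
  obtain z \<beta> where a: "a = (z, \<beta>)" by fastforce
  obtain x' \<gamma>\<^sub>1 where x': "(x', \<gamma>\<^sub>1) \<in> send u" "dist (z, \<beta>) (x', \<gamma>\<^sub>1) \<le> send_metric u w"
    using send_metric_near(2)[OF u w \<open>a \<in> send w\<close>] a by auto
  obtain y' \<gamma>\<^sub>2 where y': "(y', \<gamma>\<^sub>2) \<in> send v" "dist (z, \<beta>) (y', \<gamma>\<^sub>2) \<le> send_metric v w"
    using send_metric_near(2)[OF v w \<open>a \<in> send w\<close>] a by auto
  have "(t *\<^sub>R x' + (1 - t) *\<^sub>R y', min \<gamma>\<^sub>1 \<gamma>\<^sub>2) \<in> send (fadd (fscale t u) (fscale (1 - t) v))"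
    by (rule send_convex_combination_memI[OF u v x'(1) y'(1)])
  moreover have "dist a (t *\<^sub>R x' + (1 - t) *\<^sub>R y', min \<gamma>\<^sub>1 \<gamma>\<^sub>2)
      \<le> sqrt ((send_metric u w)\<^sup>2 + (send_metric v w)\<^sup>2)"
    using dist_convex_combination_min_level[OF t x'(2) y'(2)]
    by (simp add: a scaleR_collapse[of t z, unfolded add.commute[of "(1 - t) *\<^sub>R z"]])
  ultimately show "\<exists>b\<in>send (fadd (fscale t u) (fscale (1 - t) v)).
      dist a b \<le> sqrt ((send_metric u w)\<^sup>2 + (send_metric v w)\<^sup>2)"
    by blast
qed (use send_nonempty acut_convex_combination(1) assms in auto)

theorem theorem2p1:
  fixes u v w :: "'a::euclidean_space \<Rightarrow> real" and \<alpha> :: real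
  assumes "u \<in> fuzzy_numbers" and "v \<in> fuzzy_numbers" and "w \<in> fuzzy_numbers"
    and "\<alpha> \<in> {0..1}"
  shows "send_metric (fadd (fscale \<alpha> u) (fscale (1 - \<alpha>) v)) w
           \<le> sqrt ((send_metric u w)\<^sup>2 + (send_metric v w)\<^sup>2)"
  using hausdorff_semi_send_convex_combination_left[OF assms(1-3)]
    hausdorff_semi_send_convex_combination_right[OF assms(1-3)] assms(4)
  by (simp add: send_metric_def hausdorff_def)

end
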